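(* Let $T:X\rightrightarrows X^*$ be a maximal monotone operator on a real Banach space $X$ with $\mathrm{int}\,D_T\ne\emptyset$. Then $T$ is directionally inf bounded at every $x\in\mathrm{int}\,D_T$.
   Context: For $x\in X$ and $A\subset X$, $K_{x,A}=\{(1-t)x+ta: 0\le t\le1,\ a\in A\}$; $B(x,\epsilon)$ is the open ball. A monotone operator $T$ is directionally inf bounded at $x\in D_T$ if for every $y\in X$ there exist $\epsilon>0$ and $M>0$ such that for every $z\in K_{y,B(x,\epsilon)}\cap D_T$ there is $z^*\in T(z)$ with $\langle z^*,z-y\rangle\le M\|z-y\|$. *)

theory Defs
  imports "HOL-Analysis.Analysis"
begin

definition dom_op :: "('a::real_normed_vector \<Rightarrow> ('a \<Rightarrow>\<^sub>L real) set) \<Rightarrow> 'a set" where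
  "dom_op T = {x. T x \<noteq> {}}"

definition monotone_op :: "('a::real_normed_vector \<Rightarrow> ('a \<Rightarrow>\<^sub>L real) set) \<Rightarrow> bool" where
  "monotone_op T \<longleftrightarrow> (\<forall>x y xs ys. xs \<in> T x \<longrightarrow> ys \<in> T y \<longrightarrow> 0 \<le> blinfun_apply (xs - ys) (x - y))"

definition maximal_monotone_op :: "('a::real_normed_vector \<Rightarrow> ('a \<Rightarrow>\<^sub>L real) set) \<Rightarrow> bool" where
  "maximal_monotone_op T \<longleftrightarrow> monotone_op T \<and>
     (\<forall>S. monotone_op S \<and> (\<forall>x. T x \<subseteq> S x) \<longrightarrow> S = T)"

definition Kset :: "'a::real_vector \<Rightarrow> 'a set \<Rightarrow> 'a set" where
  "Kset x A = {(1 - t) *\<^sub>R x + t *\<^sub>R a | t a. 0 \<le> t \<and> t \<le> 1 \<and> a \<in> A}"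

definition dir_inf_bounded :: "('a::real_normed_vector \<Rightarrow> ('a \<Rightarrow>\<^sub>L real) set) \<Rightarrow> 'a \<Rightarrow> bool" where
  "dir_inf_bounded T x \<longleftrightarrow>
     (\<forall>y. \<exists>\<epsilon>>0. \<exists>M>0. \<forall>z \<in> Kset y (ball x \<epsilon>) \<inter> dom_op T.
        \<exists>zs \<in> T z. blinfun_apply zs (z - y) \<le> M * norm (z - y))"

end

theory Submission
  imports Defs
begin

(* Directional inf-boundedness of a monotone operator T at interior points of its domain.

   The heart of the proof is local boundedness of monotone operators at interior points of
   the domain (Rockafellar).  For a bounded set B we introduce the closed convex sets
     sublevel_op T B c = {u. ws (u - w) <= c for all w in B and ws in T w}.
   By monotonicity every point of the domain lies in one of the countably many sets
   sublevel_op T B n, so by the Baire category theorem one of them has an interior point u0.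
   Pushing a domain point slightly beyond a given interior point x away from u0 and using
   convexity, x itself is an interior point of some sublevel set; taking B a small ball around x
   this yields a uniform bound on the norms of T near x.

   Directional inf-boundedness then follows from the segment inequality: if z lies on the
   segment from y to a point a near x, monotonicity gives an element zs of T z with
   zs (z - y) <= as (z - y) for any as in T a, and as is bounded in norm. *)

definition sublevel_op :: "('a::real_normed_vector \<Rightarrow> ('a \<Rightarrow>\<^sub>L real) set) \<Rightarrow> 'a set \<Rightarrow> real \<Rightarrow> 'a set" where
  "sublevel_op T B c = {u. \<forall>w\<in>B. \<forall>ws\<in>T w. blinfun_apply ws (u - w) \<le> c}"

lemma sublevel_op_as_INT:
  "sublevel_op T B c = (\<Inter>w\<in>B. \<Inter>ws\<in>T w. {u. blinfun_apply ws u \<le> c + blinfun_apply ws w})"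
  by (auto simp: sublevel_op_def blinfun.diff_right algebra_simps)

lemma closed_sublevel_op: "closed (sublevel_op T B c)"
  unfolding sublevel_op_as_INT
  by (intro closed_INT ballI closed_Collect_le continuous_intros)

lemma convex_sublevel_op: "convex (sublevel_op T B c)"
  unfolding sublevel_op_as_INT
proof (intro convex_INT ballI)
  fix w and ws :: "'a \<Rightarrow>\<^sub>L real"
  have "{u. ws u \<le> c + ws w} = blinfun_apply ws -` {..c + ws w}"
    by auto
  then show "convex {u. ws u \<le> c + ws w}"
    by (simp add: convex_linear_vimage bounded_linear.linear[OF blinfun.bounded_linear_right])
qed

lemma sublevel_op_mono: "c \<le> c' \<Longrightarrow> sublevel_op T B c \<subseteq> sublevel_op T B c'"
  by (force simp: sublevel_op_def)

lemma monotone_op_le: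
  assumes "monotone_op T" "xs \<in> T x" "ys \<in> T y"
  shows "blinfun_apply ys (x - y) \<le> blinfun_apply xs (x - y)"
  using assms unfolding monotone_op_def by (force simp: blinfun.diff_left)

lemma dom_op_in_sublevel_op:
  assumes mono: "monotone_op T" and u: "u \<in> dom_op T" and B: "bounded B"
  shows "\<exists>n::nat. u \<in> sublevel_op T B (real n)"
proof -
  obtain us where us: "us \<in> T u" using u unfolding dom_op_def by auto
  obtain b where b: "\<And>w. w \<in> B \<Longrightarrow> norm w \<le> b" using B by (auto simp: bounded_pos)
  obtain n :: nat where n: "norm us * (norm u + b) \<le> real n" using real_arch_simple by blast
  have "blinfun_apply ws (u - w) \<le> real n" if w: "w \<in> B" and ws: "ws \<in> T w" for w ws
  proof -
    have "blinfun_apply ws (u - w) \<le> blinfun_apply us (u - w)"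
      using monotone_op_le[OF mono us ws] .
    also have "\<dots> \<le> norm us * norm (u - w)"
      using norm_blinfun[of us "u - w"] by simp
    also have "\<dots> \<le> norm us * (norm u + b)"
      using norm_triangle_ineq4[of u w] b[OF w] by (intro mult_left_mono) auto
    finally show ?thesis using n by linarith
  qed
  then show ?thesis unfolding sublevel_op_def by blast
qed

lemma sublevel_op_Baire:
  fixes T :: "'a::banach \<Rightarrow> ('a \<Rightarrow>\<^sub>L real) set"
  assumes mono: "monotone_op T" and int: "interior (dom_op T) \<noteq> {}" and B: "bounded B"
  shows "\<exists>n::nat. interior (sublevel_op T B (real n)) \<noteq> {}"
proof (rule ccontr)
  let ?F = "range (\<lambda>n::nat. sublevel_op T B (real n))"
  assume nowhere_dense: "\<nexists>n::nat. interior (sublevel_op T B (real n)) \<noteq> {}"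
  have "euclidean interior_of (\<Union>?F) = {}"
  proof (rule Baire_category_alt)
    show "completely_metrizable_space (euclidean :: 'a topology) \<or>
        locally_compact_space (euclidean :: 'a topology) \<and> regular_space (euclidean :: 'a topology)"
      using completely_metrizable_space_euclidean by blast
    fix S assume "S \<in> ?F"
    then obtain n :: nat where S: "S = sublevel_op T B (real n)" by blast
    show "closedin euclidean S \<and> euclidean interior_of S = {}"
      unfolding S closed_closedin[symmetric] using closed_sublevel_op nowhere_dense by simp
  qed simp
  then have "interior (\<Union>?F) = {}" by simp
  moreover have "dom_op T \<subseteq> \<Union>?F"
    using dom_op_in_sublevel_op[OF mono _ B] by blast
  ultimately show False
    using int interior_mono by blast
qed

(* Shrinking a point of a convex set towards an interior point keeps a ball inside the set;
   a normed-space version of the library lemma mem_interior_convex_shrink. *)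
lemma convex_shrink_ball:
  fixes S :: "'a::real_normed_vector set"
  assumes "convex S" "ball c d \<subseteq> S" "x \<in> S" "0 < e" "e \<le> 1"
  shows "ball (x - e *\<^sub>R (x - c)) (e * d) \<subseteq> S"
proof
  fix y assume y: "y \<in> ball (x - e *\<^sub>R (x - c)) (e * d)"
  define c' where "c' = c + (1 / e) *\<^sub>R (y - (x - e *\<^sub>R (x - c)))"
  have "dist c c' = (1 / e) * dist (x - e *\<^sub>R (x - c)) y"
    using \<open>e > 0\<close> by (simp add: c'_def dist_norm norm_minus_commute)
  also have "\<dots> < d"
    using y \<open>e > 0\<close> by (simp add: field_simps)
  finally have "c' \<in> S" using assms(2) by auto
  moreover have "y = (1 - e) *\<^sub>R x + e *\<^sub>R c'"
    using \<open>e > 0\<close> by (simp add: c'_def algebra_simps)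
  ultimately show "y \<in> S"
    using assms(1,3-5) by (simp add: convexD)
qed

lemma interior_sublevel_op:
  fixes T :: "'a::banach \<Rightarrow> ('a \<Rightarrow>\<^sub>L real) set"
  assumes mono: "monotone_op T" and x: "x \<in> interior (dom_op T)" and B: "bounded B"
  shows "\<exists>c. x \<in> interior (sublevel_op T B c)"
proof -
  obtain n :: nat where "interior (sublevel_op T B (real n)) \<noteq> {}"
    using sublevel_op_Baire[OF mono _ B] x by blast
  then obtain u0 \<rho> where rho: "\<rho> > 0" "ball u0 \<rho> \<subseteq> sublevel_op T B (real n)"
    by (meson ex_in_conv mem_interior)
  obtain r where r: "r > 0" "ball x r \<subseteq> dom_op T"
    using x by (meson mem_interior)
  define s where "s = r / (2 * (norm (x - u0) + 1))"
  have s: "s > 0" using r by (simp add: s_def add_nonneg_pos)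
  define x' where "x' = x + s *\<^sub>R (x - u0)"
  have "norm (x' - x) = s * norm (x - u0)"
    using s by (simp add: x'_def)
  also have "\<dots> = r / 2 * (norm (x - u0) / (norm (x - u0) + 1))"
    by (simp add: s_def field_simps)
  also have "\<dots> < r"
    using r by (simp add: divide_less_eq add_nonneg_pos)
  finally have "x' \<in> dom_op T" using r by (auto simp: dist_norm norm_minus_commute)
  then obtain m :: nat where m: "x' \<in> sublevel_op T B (real m)"
    using dom_op_in_sublevel_op[OF mono _ B] by blast
  define c where "c = max (real n) (real m)"
  have "sublevel_op T B (real n) \<subseteq> sublevel_op T B c" "sublevel_op T B (real m) \<subseteq> sublevel_op T B c"
    by (simp_all add: c_def sublevel_op_mono)
  then have "ball u0 \<rho> \<subseteq> sublevel_op T B c" "x' \<in> sublevel_op T B c"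
    using rho m by blast+
  then have "ball (x' - (s / (1 + s)) *\<^sub>R (x' - u0)) ((s / (1 + s)) * \<rho>) \<subseteq> sublevel_op T B c"
    using s by (intro convex_shrink_ball convex_sublevel_op) auto
  moreover have "x' - (s / (1 + s)) *\<^sub>R (x' - u0) = x"
  proof -
    have "x' - u0 = (1 + s) *\<^sub>R (x - u0)" by (simp add: x'_def algebra_simps)
    then show ?thesis using s by (simp add: x'_def)
  qed
  moreover have "s / (1 + s) * \<rho> > 0" using rho s by simp
  ultimately show ?thesis by (metis mem_interior)
qed

lemma norm_blinfun_le_from_ball:
  fixes f :: "'a::real_normed_vector \<Rightarrow>\<^sub>L real"
  assumes c: "c > 0" and h: "\<And>v. norm v \<le> c \<Longrightarrow> blinfun_apply f v \<le> N"
  shows "norm f \<le> N / c"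
proof (rule norm_blinfun_bound)
  show "0 \<le> N / c" using h[of 0] c by simp
  fix v :: 'a
  show "norm (blinfun_apply f v) \<le> N / c * norm v"
  proof (cases "v = 0")
    case False
    define v' where "v' = (c / norm v) *\<^sub>R v"
    have "norm v' = c" "norm (- v') = c" using False c by (simp_all add: v'_def)
    then have "blinfun_apply f v' \<le> N" "- blinfun_apply f v' \<le> N"
      using h[of v'] h[of "- v'"] by (simp_all add: blinfun.minus_right)
    then have "\<bar>blinfun_apply f v'\<bar> \<le> N" by linarith
    then have "c / norm v * \<bar>blinfun_apply f v\<bar> \<le> N"
      using c by (simp add: v'_def blinfun.scaleR_right abs_mult)
    then show ?thesis using False c by (simp add: field_simps)
  qed simp
qed

lemma sublevel_op_norm_bound:
  fixes T :: "'a::real_normed_vector \<Rightarrow> ('a \<Rightarrow>\<^sub>L real) set"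
  assumes ball: "ball x \<eta> \<subseteq> sublevel_op T B c" and w: "w \<in> B" "w \<in> ball x (\<eta> / 2)"
    and ws: "ws \<in> T w"
  shows "norm ws \<le> c / (\<eta> / 2)"
proof (rule norm_blinfun_le_from_ball)
  show "\<eta> / 2 > 0" using w(2) dist_not_less_zero[of x w] by (simp, linarith)
  fix v :: 'a assume "norm v \<le> \<eta> / 2"
  then have "w + v \<in> ball x \<eta>"
    using w(2) norm_triangle_ineq[of "x - w" "- v"] by (simp add: dist_norm algebra_simps)
  then show "blinfun_apply ws v \<le> c"
    using ball w(1) ws unfolding sublevel_op_def by force
qed

lemma monotone_op_locally_bounded:
  fixes T :: "'a::banach \<Rightarrow> ('a \<Rightarrow>\<^sub>L real) set"
  assumes mono: "monotone_op T" and x: "x \<in> interior (dom_op T)"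
  shows "\<exists>\<delta>>0. ball x \<delta> \<subseteq> dom_op T \<and> (\<exists>K. \<forall>w\<in>ball x \<delta>. \<forall>ws\<in>T w. norm ws \<le> K)"
proof -
  obtain r where r: "r > 0" "ball x r \<subseteq> dom_op T"
    using x by (meson mem_interior)
  obtain c where "x \<in> interior (sublevel_op T (ball x r) c)"
    using interior_sublevel_op[OF mono x bounded_ball] by blast
  then obtain \<eta> where eta: "\<eta> > 0" "ball x \<eta> \<subseteq> sublevel_op T (ball x r) c"
    by (meson mem_interior)
  define \<delta> where "\<delta> = min r (\<eta> / 2)"
  have "ball x \<delta> \<subseteq> ball x r" "ball x \<delta> \<subseteq> ball x (\<eta> / 2)"
    by (auto simp: \<delta>_def)
  then have "\<forall>w\<in>ball x \<delta>. \<forall>ws\<in>T w. norm ws \<le> c / (\<eta> / 2)"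
    using sublevel_op_norm_bound[OF eta(2)] by blast
  moreover have "\<delta> > 0" "ball x \<delta> \<subseteq> dom_op T"
    using r eta by (auto simp: \<delta>_def)
  ultimately show ?thesis by blast
qed

lemma monotone_op_segment:
  assumes mono: "monotone_op T" and z: "z \<in> dom_op T" and as: "as \<in> T a"
    and zdef: "z = (1 - t) *\<^sub>R y + t *\<^sub>R a" and t: "0 \<le> t" "t \<le> 1"
  shows "\<exists>zs\<in>T z. blinfun_apply zs (z - y) \<le> blinfun_apply as (z - y)"
proof (cases "t = 1")
  case True
  then show ?thesis using as zdef by auto
next
  case False
  obtain zs where zs: "zs \<in> T z" using z unfolding dom_op_def by auto
  have "z - a = (1 - t) *\<^sub>R (y - a)" using zdef by (simp add: algebra_simps)
  then have "(1 - t) * blinfun_apply as (y - a) \<le> (1 - t) * blinfun_apply zs (y - a)"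
    using monotone_op_le[OF mono zs as] by (simp add: blinfun.scaleR_right)
  then have "blinfun_apply as (y - a) \<le> blinfun_apply zs (y - a)"
    using False t by simp
  then have "blinfun_apply zs (a - y) \<le> blinfun_apply as (a - y)"
    using blinfun.minus_right[of zs "a - y"] blinfun.minus_right[of as "a - y"] by simp
  then have "t * blinfun_apply zs (a - y) \<le> t * blinfun_apply as (a - y)"
    using t(1) by (rule mult_left_mono)
  moreover have "z - y = t *\<^sub>R (a - y)" using zdef by (simp add: algebra_simps)
  ultimately show ?thesis using zs by (auto simp: blinfun.scaleR_right)
qed

lemma monotone_op_Kset_bound:
  assumes mono: "monotone_op T" and dom: "ball x \<delta> \<subseteq> dom_op T"
    and bdd: "\<And>w ws. w \<in> ball x \<delta> \<Longrightarrow> ws \<in> T w \<Longrightarrow> norm ws \<le> M"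
    and z: "z \<in> Kset y (ball x \<delta>) \<inter> dom_op T"
  shows "\<exists>zs\<in>T z. blinfun_apply zs (z - y) \<le> M * norm (z - y)"
proof -
  obtain t a where ta: "0 \<le> t" "t \<le> 1" "a \<in> ball x \<delta>" "z = (1 - t) *\<^sub>R y + t *\<^sub>R a"
    using z unfolding Kset_def by blast
  have "a \<in> dom_op T" using ta(3) dom by blast
  then obtain as where as: "as \<in> T a" unfolding dom_op_def by auto
  obtain zs where zs: "zs \<in> T z" "blinfun_apply zs (z - y) \<le> blinfun_apply as (z - y)"
    using monotone_op_segment[OF mono _ as ta(4,1,2)] z by blast
  have "blinfun_apply as (z - y) \<le> norm as * norm (z - y)"
    using norm_blinfun[of as "z - y"] by simp
  also have "\<dots> \<le> M * norm (z - y)"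
    using bdd[OF ta(3) as] by (simp add: mult_right_mono)
  finally show ?thesis using zs by (meson order_trans)
qed

theorem lemma2p13:
  fixes T :: "'a::banach \<Rightarrow> ('a \<Rightarrow>\<^sub>L real) set"
  assumes "maximal_monotone_op T"
    and "interior (dom_op T) \<noteq> {}"
  shows "\<forall>x \<in> interior (dom_op T). dir_inf_bounded T x"
proof
  fix x assume x: "x \<in> interior (dom_op T)"
  have mono: "monotone_op T" using assms(1) unfolding maximal_monotone_op_def by simp
  obtain \<delta> K where \<delta>: "\<delta> > 0" "ball x \<delta> \<subseteq> dom_op T"
    and K: "\<And>w ws. w \<in> ball x \<delta> \<Longrightarrow> ws \<in> T w \<Longrightarrow> norm ws \<le> K"
    using monotone_op_locally_bounded[OF mono x] by blast
  define M where "M = max K 0 + 1"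
  have "M > 0" "\<And>w ws. w \<in> ball x \<delta> \<Longrightarrow> ws \<in> T w \<Longrightarrow> norm ws \<le> M"
    using K by (force simp: M_def)+
  then show "dir_inf_bounded T x" unfolding dir_inf_bounded_def
    using monotone_op_Kset_bound[OF mono \<delta>(2)] \<delta>(1) by blast
qed

end
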